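(* Let $r\ge3$, $n\ge r+1$. For every $e\in V_\omega$ we have $R.e=(F_1F_2\cdots F_r).e$ and $R^{-1}.e=(E_{r-1}E_{r-2}\cdots E_1)E_n.e$.
   Context: $V$ is the $\mathbb{Q}(v)$-space with basis $e_t$ ($t\in\mathbb{Z}$); $E_i,F_i,K_i$ ($1\le i\le n$) act by $E_ie_{t+1}=e_t$ if $i\equiv t\pmod n$ and $0$ otherwise, $F_ie_t=e_{t+1}$ if $i\equiv t\pmod n$ and $0$ otherwise, $K_ie_t=ve_t$ if $i\equiv t\pmod n$ and $e_t$ otherwise; $R^{\pm1}e_t=e_{t\pm1}$. On $V^{\otimes r}$ these act via iterated comultiplication $\Delta(E_i)=E_i\otimes K_iK_{i+1}^{-1}+1\otimes E_i$, $\Delta(F_i)=K_i^{-1}K_{i+1}\otimes F_i+F_i\otimes1$, $\Delta(X)=X\otimes X$ for $X\in\{K_i^{\pm1},R^{\pm1}\}$ (indices mod $n$). The weight of a basis tensor $e_{t_1}\otimes\cdots\otimes e_{t_r}$ is $\lambda\in\mathbb{Z}_{\ge0}^n$ with $\lambda_i=|\{j:t_j\equiv i\pmod n\}|$; $V_\lambda$ is the span of basis tensors of weight $\lambda$. $\omega=(1,\dots,1,0,\dots,0)$ with $r$ ones and $n-r$ zeros. *)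

theory Defs
  imports "HOL-Computational_Algebra.Fraction_Field" "HOL-Computational_Algebra.Polynomial"
begin

type_synonym Qv = "rat poly fract"

definition qv :: Qv where "qv = Fraction_Field.Fract [:0, 1:] 1"

text \<open>Elements of the tensor power V^{\<otimes> r}: coefficient functions on basis tensors
  e_{t_1} \<otimes> ... \<otimes> e_{t_r}, indexed by lists [t_1,...,t_r].\<close>
type_synonym 'a tvec = "int list \<Rightarrow> 'a"

definition bt :: "int list \<Rightarrow> 'a::field tvec" where
  "bt u = (\<lambda>s. if s = u then 1 else 0)"

definition prepend :: "int \<Rightarrow> 'a::field tvec \<Rightarrow> 'a tvec" where
  "prepend t w = (\<lambda>s. case s of [] \<Rightarrow> 0 | x # xs \<Rightarrow> if x = t then w xs else 0)"

definition icong :: "nat \<Rightarrow> nat \<Rightarrow> int \<Rightarrow> bool" where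
  "icong n i t \<longleftrightarrow> int i mod int n = t mod int n"

text \<open>eigenvalue of K_i on e_t\<close>
definition kval :: "nat \<Rightarrow> 'a::field \<Rightarrow> nat \<Rightarrow> int \<Rightarrow> 'a" where
  "kval n v i t = (if icong n i t then v else 1)"

text \<open>Action of E_i on basis tensors via iterated comultiplication
  \<Delta>(E_i) = E_i \<otimes> K_i K_{i+1}^{-1} + 1 \<otimes> E_i (on V \<otimes> V^{\<otimes>(r-1)}).\<close>
fun Eact :: "nat \<Rightarrow> 'a::field \<Rightarrow> nat \<Rightarrow> int list \<Rightarrow> 'a tvec" where
  "Eact n v i [] = (\<lambda>s. 0)"
| "Eact n v i (t # ts) =
     (\<lambda>s. (if icong n i (t - 1)
            then (\<Prod>x\<leftarrow>ts. kval n v i x / kval n v (Suc i) x) * bt ((t - 1) # ts) s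
            else 0)
          + prepend t (Eact n v i ts) s)"

text \<open>Action of F_i via \<Delta>(F_i) = K_i^{-1} K_{i+1} \<otimes> F_i + F_i \<otimes> 1.\<close>
fun Fact :: "nat \<Rightarrow> 'a::field \<Rightarrow> nat \<Rightarrow> int list \<Rightarrow> 'a tvec" where
  "Fact n v i [] = (\<lambda>s. 0)"
| "Fact n v i (t # ts) =
     (\<lambda>s. (kval n v (Suc i) t / kval n v i t) * prepend t (Fact n v i ts) s
          + (if icong n i t then bt ((t + 1) # ts) s else 0))"

text \<open>R^{\<plusminus>1} acts diagonally: \<Delta>(R) = R \<otimes> R.\<close>
definition Ract :: "int list \<Rightarrow> 'a::field tvec" where
  "Ract ts = bt (map (\<lambda>t. t + 1) ts)"

definition Rinvact :: "int list \<Rightarrow> 'a::field tvec" where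
  "Rinvact ts = bt (map (\<lambda>t. t - 1) ts)"

datatype gen = GE nat | GF nat | GR | GRinv

fun gen_act :: "nat \<Rightarrow> 'a::field \<Rightarrow> gen \<Rightarrow> int list \<Rightarrow> 'a tvec" where
  "gen_act n v (GE i) = Eact n v i"
| "gen_act n v (GF i) = Fact n v i"
| "gen_act n v GR = Ract"
| "gen_act n v GRinv = Rinvact"

definition lin :: "(int list \<Rightarrow> 'a::field tvec) \<Rightarrow> 'a tvec \<Rightarrow> 'a tvec" where
  "lin A f = (\<lambda>s. \<Sum>u\<in>{u. f u \<noteq> 0}. f u * A u s)"

definition word_act :: "nat \<Rightarrow> 'a::field \<Rightarrow> gen list \<Rightarrow> 'a tvec \<Rightarrow> 'a tvec" where
  "word_act n v w f = foldr (\<lambda>g h. lin (gen_act n v g) h) w f"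

definition weight :: "nat \<Rightarrow> int list \<Rightarrow> nat \<Rightarrow> nat" where
  "weight n ts i = card {j. j < length ts \<and> icong n i (ts ! j)}"

definition omega :: "nat \<Rightarrow> nat \<Rightarrow> nat" where
  "omega r i = (if i \<le> r then 1 else 0)"

definition Vwt :: "nat \<Rightarrow> nat \<Rightarrow> (nat \<Rightarrow> nat) \<Rightarrow> 'a::field tvec set" where
  "Vwt n r lam = {f. finite {u. f u \<noteq> 0} \<and>
     (\<forall>u. f u \<noteq> 0 \<longrightarrow> length u = r \<and> (\<forall>i\<in>{1..n}. weight n u i = lam i))}"

end

theory Submission
  imports Defs
begin

text \<open>A basis tensor of weight \<omega> has entries whose residues mod n are 1, ..., r, each
  exactly once. Hence F_r finds exactly one entry of residue r and none of residue r + 1, so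
  all K-factors in its coproduct act by 1 and it just raises that entry; then F_(r-1) finds
  the same situation one residue lower, and so on, until F_1 ... F_r has raised every entry
  by one, which is what R does. Dually E_n lowers the entry of residue 1 to residue 0, and
  then E_1, ..., E_(r-1) lower the entries of residues 2, ..., r in turn. As every generator
  maps each relevant basis tensor to a single basis tensor with coefficient 1, the words
  act on a vector by pushing its coefficients forward along maps of basis tensors.\<close>

definition pushforward :: "(int list \<Rightarrow> int list) \<Rightarrow> 'a::field tvec \<Rightarrow> 'a tvec" where
  "pushforward \<phi> f = (\<lambda>s. \<Sum>u | f u \<noteq> 0 \<and> \<phi> u = s. f u)"

lemma pushforward_cong:
  "(\<And>u. f u \<noteq> 0 \<Longrightarrow> \<phi> u = \<psi> u) \<Longrightarrow> pushforward \<phi> f = pushforward \<psi> f"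
  unfolding pushforward_def by (intro ext sum.cong) auto

lemma pushforward_id: "pushforward (\<lambda>u. u) f = f"
proof
  fix s
  have "{u. f u \<noteq> 0 \<and> u = s} = (if f s = 0 then {} else {s})" by auto
  then show "pushforward (\<lambda>u. u) f s = f s" by (simp add: pushforward_def)
qed

lemma support_pushforward: "{s. pushforward \<phi> f s \<noteq> 0} \<subseteq> \<phi> ` {u. f u \<noteq> 0}"
proof
  fix s assume "s \<in> {s. pushforward \<phi> f s \<noteq> 0}"
  then have "(\<Sum>u | f u \<noteq> 0 \<and> \<phi> u = s. f u) \<noteq> 0" by (simp add: pushforward_def)
  then have "{u. f u \<noteq> 0 \<and> \<phi> u = s} \<noteq> {}" by (rule contrapos_nn) (simp only: sum.empty)
  then show "s \<in> \<phi> ` {u. f u \<noteq> 0}" by auto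
qed

lemma lin_pushforward:
  assumes fin: "finite {u. f u \<noteq> 0}"
    and A: "\<And>u. f u \<noteq> 0 \<Longrightarrow> A (\<psi> u) = bt (\<psi>' u)"
  shows "lin A (pushforward \<psi> f) = pushforward \<psi>' f"
proof
  fix s
  let ?S = "{u. f u \<noteq> 0}"
  have "lin A (pushforward \<psi> f) s = (\<Sum>w\<in>\<psi> ` ?S. pushforward \<psi> f w * A w s)"
    unfolding lin_def
    by (rule sum.mono_neutral_left) (use fin support_pushforward[of \<psi> f] in auto)
  also have "\<dots> = (\<Sum>w\<in>\<psi> ` ?S. \<Sum>u | u \<in> ?S \<and> \<psi> u = w. f u * A (\<psi> u) s)"
    unfolding pushforward_def sum_distrib_right by (intro sum.cong refl) auto
  also have "\<dots> = (\<Sum>w\<in>\<psi> ` ?S. \<Sum>u | u \<in> ?S \<and> \<psi> u = w. f u * bt (\<psi>' u) s)"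
    by (intro sum.cong refl) (simp add: A)
  also have "\<dots> = (\<Sum>u\<in>?S. f u * bt (\<psi>' u) s)"
    by (rule sum.group) (use fin in auto)
  also have "\<dots> = (\<Sum>u\<in>?S. if \<psi>' u = s then f u else 0)"
    by (intro sum.cong refl) (auto simp: bt_def)
  also have "\<dots> = pushforward \<psi>' f s"
    unfolding pushforward_def by (simp add: sum.inter_filter[OF fin, symmetric])
  finally show "lin A (pushforward \<psi> f) s = pushforward \<psi>' f s" .
qed

lemma word_act_Cons: "word_act n v (g # w) f = lin (gen_act n v g) (word_act n v w f)"
  by (simp add: word_act_def)

lemma word_act_GR:
  "finite {u. f u \<noteq> 0} \<Longrightarrow> word_act n v [GR] f = pushforward (map (\<lambda>t. t + 1)) f"
  using lin_pushforward[of f Ract "\<lambda>u. u"] by (simp add: word_act_def pushforward_id Ract_def)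

lemma word_act_GRinv:
  "finite {u. f u \<noteq> 0} \<Longrightarrow> word_act n v [GRinv] f = pushforward (map (\<lambda>t. t - 1)) f"
  using lin_pushforward[of f Rinvact "\<lambda>u. u"] by (simp add: word_act_def pushforward_id Rinvact_def)

lemma prepend_bt: "prepend t (bt w) = bt (t # w)"
  by (rule ext) (auto simp: prepend_def bt_def split: list.split)

lemma prepend_zero: "prepend t (\<lambda>s. 0) = (\<lambda>s. 0)"
  by (rule ext) (auto simp: prepend_def split: list.split)

lemma Fact_eq_zero: "\<forall>t\<in>set u. \<not> icong n i t \<Longrightarrow> Fact n v i u = (\<lambda>s. 0)"
  by (induction u) (auto simp: prepend_zero)

lemma Eact_eq_zero: "\<forall>t\<in>set u. \<not> icong n i (t - 1) \<Longrightarrow> Eact n v i u = (\<lambda>s. 0)"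
  by (induction u) (auto simp: prepend_zero)

lemma icong_Suc: "icong n (Suc i) t = icong n i (t - 1)"
  unfolding icong_def by (simp add: mod_eq_dvd_iff algebra_simps)

lemma Fact_eq_bt:
  assumes "length (filter (icong n i) u) = 1" and "\<forall>t\<in>set u. \<not> icong n (Suc i) t"
  shows "Fact n v i u = bt (map (\<lambda>t. if icong n i t then t + 1 else t) u)"
  using assms
proof (induction u)
  case (Cons t ts)
  show ?case
  proof (cases "icong n i t")
    case True
    with Cons.prems have "\<forall>x\<in>set ts. \<not> icong n i x" by (simp add: filter_empty_conv)
    with True show ?thesis by (simp add: Fact_eq_zero prepend_zero map_idI)
  next
    case False
    with Cons.prems have "kval n v (Suc i) t = 1" "kval n v i t = 1" by (auto simp: kval_def)
    with False Cons show ?thesis by (simp add: prepend_bt[symmetric])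
  qed
qed simp

lemma Eact_eq_bt:
  assumes "length (filter (icong n (Suc i)) u) = 1" and "\<forall>t\<in>set u. \<not> icong n i t"
  shows "Eact n v i u = bt (map (\<lambda>t. if icong n (Suc i) t then t - 1 else t) u)"
  using assms
proof (induction u)
  case (Cons t ts)
  show ?case
  proof (cases "icong n (Suc i) t")
    case True
    with Cons.prems have none: "\<forall>x\<in>set ts. \<not> icong n (Suc i) x" by (simp add: filter_empty_conv)
    with Cons.prems have "\<forall>x\<in>set ts. kval n v i x / kval n v (Suc i) x = 1"
      by (simp add: kval_def)
    then have "(\<Prod>x\<leftarrow>ts. kval n v i x / kval n v (Suc i) x) = 1"
      by (induction ts) auto
    with True none show ?thesis
      by (simp add: icong_Suc Eact_eq_zero prepend_zero map_idI)
  next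
    case False
    with Cons show ?thesis by (simp add: icong_Suc prepend_bt[symmetric])
  qed
qed simp

lemma icong_add_iff:
  assumes "\<bar>int i - (t mod int n + d)\<bar> < int n"
  shows "icong n i (t + d) \<longleftrightarrow> int i = t mod int n + d"
proof -
  have "icong n i (t + d) \<longleftrightarrow> int i mod int n = (t mod int n + d) mod int n"
    unfolding icong_def by (simp add: mod_add_left_eq)
  also have "\<dots> \<longleftrightarrow> int n dvd int i - (t mod int n + d)"
    by (rule mod_eq_dvd_iff)
  also have "\<dots> \<longleftrightarrow> int i - (t mod int n + d) = 0"
    using dvd_imp_le_int[of "int i - (t mod int n + d)" "int n"] assms by fastforce
  finally show ?thesis by simp
qed

lemma icong_mod_index: "icong n (i mod n) = icong n i"
  by (simp add: icong_def fun_eq_iff zmod_int)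

lemma finite_support_Vwt: "e \<in> Vwt n r lam \<Longrightarrow> finite {u. e u \<noteq> 0}"
  by (simp add: Vwt_def)

definition residue_perm :: "nat \<Rightarrow> nat \<Rightarrow> int list \<Rightarrow> bool" where
  "residue_perm n r u \<longleftrightarrow> (\<forall>t\<in>set u. t mod int n \<in> {1..int r}) \<and>
     (\<forall>j\<in>{1..int r}. length (filter (\<lambda>t. t mod int n = j) u) = 1)"

lemma residue_perm_if_Vwt_omega:
  assumes "e \<in> Vwt n r (omega r)" "r < n" "e u \<noteq> 0"
  shows "residue_perm n r u"
proof -
  have count: "length (filter (icong n i) u) = omega r i" if "i \<in> {1..n}" for i
    using assms that by (auto simp: Vwt_def weight_def length_filter_conv_card)
  have "t mod int n \<in> {1..int r}" if "t \<in> set u" for t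
  proof (rule ccontr)
    assume out: "t mod int n \<notin> {1..int r}"
    define \<rho> where "\<rho> = t mod int n"
    have \<rho>: "0 \<le> \<rho>" "\<rho> < int n" "\<rho> \<notin> {1..int r}"
      using \<open>r < n\<close> out by (simp_all add: \<rho>_def)
    define i where "i = (if \<rho> = 0 then n else nat \<rho>)"
    have "i \<in> {1..n}" "r < i" using \<rho> \<open>r < n\<close> by (auto simp: i_def)
    moreover have "icong n i t" using \<rho> by (auto simp: i_def icong_def \<rho>_def)
    ultimately show False using count[of i] that by (auto simp: omega_def filter_empty_conv)
  qed
  moreover have "length (filter (\<lambda>t. t mod int n = j) u) = 1" if "j \<in> {1..int r}" for j
  proof -
    have "filter (\<lambda>t. t mod int n = j) u = filter (icong n (nat j)) u"
      using that \<open>r < n\<close> by (auto simp: icong_def intro!: filter_cong)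
    moreover have "nat j \<in> {1..n}" "nat j \<le> r" using that \<open>r < n\<close> by auto
    ultimately show ?thesis using count[of "nat j"] by (simp add: omega_def)
  qed
  ultimately show ?thesis by (simp add: residue_perm_def)
qed

definition raised_above :: "nat \<Rightarrow> nat \<Rightarrow> int \<Rightarrow> int" where
  "raised_above n m t = (if int m < t mod int n then t + 1 else t)"

definition lowered_upto :: "nat \<Rightarrow> nat \<Rightarrow> int \<Rightarrow> int" where
  "lowered_upto n m t = (if t mod int n \<le> int m then t - 1 else t)"

lemma residue_perm_map_shifts:
  assumes "residue_perm n r u"
  shows "map (raised_above n r) u = u" "map (raised_above n 0) u = map (\<lambda>t. t + 1) u"
    and "map (lowered_upto n 0) u = u" "map (lowered_upto n r) u = map (\<lambda>t. t - 1) u"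
proof -
  have res: "1 \<le> t mod int n \<and> t mod int n \<le> int r" if "t \<in> set u" for t
    using assms that by (simp add: residue_perm_def)
  show "map (raised_above n r) u = u" "map (lowered_upto n 0) u = u"
    by (auto simp: raised_above_def lowered_upto_def intro!: map_idI dest!: res)
  show "map (raised_above n 0) u = map (\<lambda>t. t + 1) u"
    and "map (lowered_upto n r) u = map (\<lambda>t. t - 1) u"
    by (auto simp: raised_above_def lowered_upto_def intro!: map_cong dest!: res)
qed

lemma icong_raised_above:
  assumes "t mod int n \<in> {1..int r}" "r < n" "i \<in> {1..r + 1}"
  shows "icong n i (raised_above n m t) \<longleftrightarrow>
    int i = t mod int n + (if int m < t mod int n then 1 else 0)"
  using icong_add_iff[of i t n "if int m < t mod int n then 1 else 0"] assms
  by (auto simp: raised_above_def)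

lemma icong_lowered_upto:
  assumes "t mod int n \<in> {1..int r}" "r < n" "i \<le> r"
  shows "icong n i (lowered_upto n m t) \<longleftrightarrow>
    int i = t mod int n - (if t mod int n \<le> int m then 1 else 0)"
  using icong_add_iff[of i t n "if t mod int n \<le> int m then -1 else 0"] assms
  by (auto simp: lowered_upto_def)

lemma Fact_raised_above:
  assumes u: "residue_perm n r u" and "r < n" "m < r"
  shows "Fact n v (Suc m) (map (raised_above n (Suc m)) u) = bt (map (raised_above n m) u)"
proof -
  have res: "t mod int n \<in> {1..int r}" if "t \<in> set u" for t
    using u that by (simp add: residue_perm_def)
  have hit: "icong n (Suc m) (raised_above n (Suc m) t) \<longleftrightarrow> t mod int n = int (Suc m)"
    if "t \<in> set u" for t
    using icong_raised_above[OF res[OF that] \<open>r < n\<close>, of "Suc m"] \<open>m < r\<close> by auto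
  have miss: "\<not> icong n (Suc (Suc m)) (raised_above n (Suc m) t)" if "t \<in> set u" for t
    using icong_raised_above[OF res[OF that] \<open>r < n\<close>, of "Suc (Suc m)"] \<open>m < r\<close> by auto
  have "filter (icong n (Suc m)) (map (raised_above n (Suc m)) u) =
      map (raised_above n (Suc m)) (filter (\<lambda>t. t mod int n = int (Suc m)) u)"
    unfolding filter_map o_def
    by (rule arg_cong[where f = "map _"], rule filter_cong) (auto simp: hit)
  then have "length (filter (icong n (Suc m)) (map (raised_above n (Suc m)) u)) = 1"
    using u \<open>m < r\<close> by (simp add: residue_perm_def)
  then have "Fact n v (Suc m) (map (raised_above n (Suc m)) u) =
      bt (map (\<lambda>x. if icong n (Suc m) x then x + 1 else x) (map (raised_above n (Suc m)) u))"
    using miss by (intro Fact_eq_bt) auto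
  also have "\<dots> = bt (map (raised_above n m) u)"
    unfolding map_map o_def
  proof (intro arg_cong[where f = bt] map_cong refl)
    fix t assume "t \<in> set u"
    with hit[of t] show "(if icong n (Suc m) (raised_above n (Suc m) t)
        then raised_above n (Suc m) t + 1 else raised_above n (Suc m) t) = raised_above n m t"
      by (auto simp: raised_above_def)
  qed
  finally show ?thesis .
qed

lemma Eact_lowered_upto:
  assumes u: "residue_perm n r u" and "r < n" "m < r" "i mod n = m"
  shows "Eact n v i (map (lowered_upto n m) u) = bt (map (lowered_upto n (Suc m)) u)"
proof -
  have icong_i: "icong n i = icong n m"
    using icong_mod_index[of n i] \<open>i mod n = m\<close> by simp
  have icong_Suc_i: "icong n (Suc i) = icong n (Suc m)"
    by (metis icong_mod_index mod_Suc_eq \<open>i mod n = m\<close>)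
  have res: "t mod int n \<in> {1..int r}" if "t \<in> set u" for t
    using u that by (simp add: residue_perm_def)
  have hit: "icong n (Suc m) (lowered_upto n m t) \<longleftrightarrow> t mod int n = int (Suc m)"
    if "t \<in> set u" for t
    using icong_lowered_upto[OF res[OF that] \<open>r < n\<close>, of "Suc m"] \<open>m < r\<close> by auto
  have miss: "\<not> icong n m (lowered_upto n m t)" if "t \<in> set u" for t
    using icong_lowered_upto[OF res[OF that] \<open>r < n\<close>, of m] \<open>m < r\<close> by auto
  have "filter (icong n (Suc m)) (map (lowered_upto n m) u) =
      map (lowered_upto n m) (filter (\<lambda>t. t mod int n = int (Suc m)) u)"
    unfolding filter_map o_def
    by (rule arg_cong[where f = "map _"], rule filter_cong) (auto simp: hit)
  then have "length (filter (icong n (Suc m)) (map (lowered_upto n m) u)) = 1"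
    using u \<open>m < r\<close> by (simp add: residue_perm_def)
  then have "Eact n v i (map (lowered_upto n m) u) =
      bt (map (\<lambda>x. if icong n (Suc m) x then x - 1 else x) (map (lowered_upto n m) u))"
    using miss by (subst Eact_eq_bt) (auto simp: icong_i icong_Suc_i)
  also have "\<dots> = bt (map (lowered_upto n (Suc m)) u)"
    unfolding map_map o_def
  proof (intro arg_cong[where f = bt] map_cong refl)
    fix t assume "t \<in> set u"
    with hit[of t] show "(if icong n (Suc m) (lowered_upto n m t)
        then lowered_upto n m t - 1 else lowered_upto n m t) = lowered_upto n (Suc m) t"
      by (auto simp: lowered_upto_def)
  qed
  finally show ?thesis .
qed

lemma word_act_raise_chain:
  assumes e: "e \<in> Vwt n r (omega r)" and "r < n" and "m \<le> r"
  shows "word_act n v (map GF [Suc m..<Suc r]) e = pushforward (map (raised_above n m)) e"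
  using \<open>m \<le> r\<close>
proof (induction m rule: inc_induct)
  case base
  have "pushforward (map (raised_above n r)) e = pushforward (\<lambda>u. u) e"
    using residue_perm_if_Vwt_omega[OF e \<open>r < n\<close>]
    by (intro pushforward_cong) (metis residue_perm_map_shifts(1))
  then show ?case by (simp add: word_act_def pushforward_id)
next
  case (step m)
  have "[Suc m..<Suc r] = Suc m # [Suc (Suc m)..<Suc r]"
    using step.hyps by (simp add: upt_conv_Cons)
  then have "word_act n v (map GF [Suc m..<Suc r]) e =
      lin (Fact n v (Suc m)) (pushforward (map (raised_above n (Suc m))) e)"
    using step.IH by (simp add: word_act_Cons)
  also have "\<dots> = pushforward (map (raised_above n m)) e"
    using step.hyps residue_perm_if_Vwt_omega[OF e \<open>r < n\<close>] \<open>r < n\<close>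
    by (intro lin_pushforward finite_support_Vwt[OF e] Fact_raised_above) auto
  finally show ?case .
qed

lemma word_act_lower_chain:
  assumes e: "e \<in> Vwt n r (omega r)" and "r < n" and "m < r"
  shows "word_act n v (map GE (rev [1..<Suc m] @ [n])) e =
    pushforward (map (lowered_upto n (Suc m))) e"
  using \<open>m < r\<close>
proof (induction m)
  case 0
  have "pushforward (map (lowered_upto n 0)) e = pushforward (\<lambda>u. u) e"
    using residue_perm_if_Vwt_omega[OF e \<open>r < n\<close>]
    by (intro pushforward_cong) (metis residue_perm_map_shifts(3))
  then have "word_act n v [GE n] e = lin (Eact n v n) (pushforward (map (lowered_upto n 0)) e)"
    by (simp add: word_act_def pushforward_id)
  also have "\<dots> = pushforward (map (lowered_upto n (Suc 0))) e"
    using 0 residue_perm_if_Vwt_omega[OF e \<open>r < n\<close>] \<open>r < n\<close>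
    by (intro lin_pushforward finite_support_Vwt[OF e] Eact_lowered_upto) auto
  finally show ?case by simp
next
  case (Suc m)
  then have "word_act n v (map GE (rev [1..<Suc (Suc m)] @ [n])) e =
      lin (Eact n v (Suc m)) (pushforward (map (lowered_upto n (Suc m))) e)"
    by (simp add: word_act_Cons)
  also have "\<dots> = pushforward (map (lowered_upto n (Suc (Suc m)))) e"
    using Suc.prems residue_perm_if_Vwt_omega[OF e \<open>r < n\<close>] \<open>r < n\<close>
    by (intro lin_pushforward finite_support_Vwt[OF e] Eact_lowered_upto) auto
  finally show ?case .
qed

theorem lemma2p1p6:
  fixes r n :: nat and e :: "Qv tvec"
  assumes "r \<ge> 3" and "n \<ge> r + 1"
    and "e \<in> Vwt n r (omega r)"
  shows "word_act n qv [GR] e = word_act n qv (map GF [1..<r+1]) e \<and>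
         word_act n qv [GRinv] e = word_act n qv (map GE (rev [1..<r]) @ [GE n]) e"
proof -
  have "r < n" using assms(2) by simp
  have fin: "finite {u. e u \<noteq> 0}" using finite_support_Vwt[OF assms(3)] .
  have res: "\<And>u. e u \<noteq> 0 \<Longrightarrow> residue_perm n r u"
    using residue_perm_if_Vwt_omega[OF assms(3) \<open>r < n\<close>] .
  have "word_act n qv [GR] e = pushforward (map (\<lambda>t. t + 1)) e"
    by (rule word_act_GR[OF fin])
  also have "\<dots> = pushforward (map (raised_above n 0)) e"
    by (intro pushforward_cong) (metis residue_perm_map_shifts(2) res)
  also have "\<dots> = word_act n qv (map GF [1..<r+1]) e"
    using word_act_raise_chain[OF assms(3) \<open>r < n\<close>, of 0] by simp
  finally have F: "word_act n qv [GR] e = word_act n qv (map GF [1..<r+1]) e" .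
  have "word_act n qv [GRinv] e = pushforward (map (\<lambda>t. t - 1)) e"
    by (rule word_act_GRinv[OF fin])
  also have "\<dots> = pushforward (map (lowered_upto n r)) e"
    by (intro pushforward_cong) (metis residue_perm_map_shifts(4) res)
  also have "\<dots> = word_act n qv (map GE (rev [1..<r]) @ [GE n]) e"
    \<comment> \<open>of \<open>r \<ge> 3\<close> only \<open>r \<ge> 1\<close> is used; for \<open>r = 0\<close>, E_n kills the empty tensor\<close>
    using word_act_lower_chain[OF assms(3) \<open>r < n\<close>, of "r - 1"] assms(1) by simp
  finally have E: "word_act n qv [GRinv] e = word_act n qv (map GE (rev [1..<r]) @ [GE n]) e" .
  from F E show ?thesis ..
qed

end
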